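(* Run UBEV-S (described in the context) on a finite-horizon episodic stationary MDP. Outside of the failure event, for all episodes $k$, timesteps $t\in[H]$ and states $s$, $\tilde V^{\pi_k}_t(s)\ge V^*_t(s)$.
   Context: Setting: a finite-horizon episodic MDP with finite state set $\mathcal S$ ($|\mathcal S|=S$), finite action set $\mathcal A$ ($|\mathcal A|=A$), horizon $H$, stationary transitions $p(s'\mid s,a)$ and mean rewards $r(s,a)\in[0,1]$ (observed rewards in $[0,1]$). $V^*_t$ is the optimal value function at timestep $t$ ($V^*_{H+1}\equiv0$). For a vector $V$, $\mathrm{rng}\,V=\max_sV(s)-\min_sV(s)$. Algorithm UBEV-S (input $\delta\in(0,1]$): maintain, aggregated over all timesteps of all past episodes, counts $n(s,a)$, reward sums $l(s,a)$, transition counts $m(s',s,a)$ (initially $0$), and a scalar $\phi^+$ initialized to $0$ once. At the start of each episode, set $\tilde V_{H+1}\equiv0$ and for $t=H,\dots,1$ and each $s$: for each $a$, $\phi(s,a)=\sqrt{(2\ln\ln(\max\{e,n(s,a)\})+\ln(27HSA/\delta))/n(s,a)}$, $\hat r(s,a)=l(s,a)/n(s,a)$, $\hat p(s,a)=m(\cdot,s,a)/n(s,a)$, $Q(a)=\min\{1,\hat r+\phi\}+\min\{\max_{s'}\tilde V_{t+1}(s'),\hat p(s,a)^\top\tilde V_{t+1}+\min\{H-t,\mathrm{rng}\,\tilde V_{t+1}+\phi^+\}\phi(s,a)\}$; set $\pi_k(s,t)=\arg\max_aQ(a)$, $\tilde V_t(s)=Q(\pi_k(s,t))$, $\phi^+\leftarrow\max\{4\sqrt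 SH^2\phi(s,\pi_k(s,t)),\phi^+\}$. Then execute $\pi_k$ for $H$ steps and update the counts. In episode $k$: $n_k,\hat r_k,\hat p_k,\phi_k$ denote the quantities at the start of the episode, and $\tilde V^{\pi_k}_t$ is the vector $\tilde V_t$ computed in episode $k$. Failure event: let $w_{tk}(s,a)$ be the probability, in episode $k$ under $\pi_k$, of being in $s$ at step $t$ and taking $a$. "Outside of the failure event" means that for all episodes $k$, timesteps $t$ and pairs $(s,a)$: $n_k(s,a)\ge\frac12\sum_{i<k}\sum_{t\in[H]}w_{ti}(s,a)-H\ln\frac{9SA}{\delta}$; $|\hat r_k(s,a)-r(s,a)|\le\phi_k(s,a)$; $|(\hat p_k(s,a)-p(\cdot\mid s,a))^\top V^*_{t+1}|\le(\mathrm{rng}\,V^*_{t+1})\phi_k(s,a)$; and $\|\hat p_k(s,a)-p(\cdot\mid s,a)\|_1\le4\sqrt S\,\phi_k(s,a)$. *)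

theory Defs
  imports "HOL-Analysis.Analysis" "HOL-Library.Extended_Real"
begin

(* Conventions: states are the naturals {..<S}, actions the naturals {..<A};
   episodes are indexed k = 1,2,...; timesteps t = 1..H; in episode i the trajectory
   visits states x i 1, ..., x i (H+1) and receives observed rewards rw i 1, ..., rw i H;
   pol i s t is the action chosen by pi_i in state s at timestep t.
   p s a s' = p(s'|s,a), r s a = mean reward. *)

definition visits :: "nat \<Rightarrow> (nat \<Rightarrow> nat \<Rightarrow> nat) \<Rightarrow> (nat \<Rightarrow> nat \<Rightarrow> nat \<Rightarrow> nat)
    \<Rightarrow> nat \<Rightarrow> nat \<Rightarrow> nat \<Rightarrow> (nat \<times> nat) set" where
  "visits H x pol k s a =
     {(i, t). 1 \<le> i \<and> i < k \<and> 1 \<le> t \<and> t \<le> H \<and> x i t = s \<and> pol i s t = a}"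

definition cnt :: "nat \<Rightarrow> (nat \<Rightarrow> nat \<Rightarrow> nat) \<Rightarrow> (nat \<Rightarrow> nat \<Rightarrow> nat \<Rightarrow> nat)
    \<Rightarrow> nat \<Rightarrow> nat \<Rightarrow> nat \<Rightarrow> nat" where
  "cnt H x pol k s a = card (visits H x pol k s a)"

definition rsum :: "nat \<Rightarrow> (nat \<Rightarrow> nat \<Rightarrow> nat) \<Rightarrow> (nat \<Rightarrow> nat \<Rightarrow> real) \<Rightarrow> (nat \<Rightarrow> nat \<Rightarrow> nat \<Rightarrow> nat)
    \<Rightarrow> nat \<Rightarrow> nat \<Rightarrow> nat \<Rightarrow> real" where
  "rsum H x rw pol k s a = (\<Sum>(i, t)\<in>visits H x pol k s a. rw i t)"

definition tcnt :: "nat \<Rightarrow> (nat \<Rightarrow> nat \<Rightarrow> nat) \<Rightarrow> (nat \<Rightarrow> nat \<Rightarrow> nat \<Rightarrow> nat)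
    \<Rightarrow> nat \<Rightarrow> nat \<Rightarrow> nat \<Rightarrow> nat \<Rightarrow> nat" where
  "tcnt H x pol k s' s a = card {(i, t)\<in>visits H x pol k s a. x i (Suc t) = s'}"

definition rhat :: "nat \<Rightarrow> (nat \<Rightarrow> nat \<Rightarrow> nat) \<Rightarrow> (nat \<Rightarrow> nat \<Rightarrow> real) \<Rightarrow> (nat \<Rightarrow> nat \<Rightarrow> nat \<Rightarrow> nat)
    \<Rightarrow> nat \<Rightarrow> nat \<Rightarrow> nat \<Rightarrow> real" where
  "rhat H x rw pol k s a = rsum H x rw pol k s a / real (cnt H x pol k s a)"

definition phat :: "nat \<Rightarrow> (nat \<Rightarrow> nat \<Rightarrow> nat) \<Rightarrow> (nat \<Rightarrow> nat \<Rightarrow> nat \<Rightarrow> nat)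
    \<Rightarrow> nat \<Rightarrow> nat \<Rightarrow> nat \<Rightarrow> nat \<Rightarrow> real" where
  "phat H x pol k s a s' = real (tcnt H x pol k s' s a) / real (cnt H x pol k s a)"

definition phi :: "nat \<Rightarrow> nat \<Rightarrow> nat \<Rightarrow> real \<Rightarrow> nat \<Rightarrow> real" where
  "phi H S A \<delta> n =
     sqrt ((2 * ln (ln (max (exp 1) (real n))) + ln (27 * real H * real S * real A / \<delta>)) / real n)"

definition phiE :: "nat \<Rightarrow> nat \<Rightarrow> nat \<Rightarrow> real \<Rightarrow> nat \<Rightarrow> ereal" where
  "phiE H S A \<delta> n = (if n = 0 then \<infinity> else ereal (phi H S A \<delta> n))"

definition maxV :: "nat \<Rightarrow> (nat \<Rightarrow> real) \<Rightarrow> real" where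
  "maxV S V = Max (V ` {..<S})"

definition rngV :: "nat \<Rightarrow> (nat \<Rightarrow> real) \<Rightarrow> real" where
  "rngV S V = Max (V ` {..<S}) - Min (V ` {..<S})"

text \<open>Q(a) of UBEV-S in episode k at timestep t, state s, with next-step vector Vn and
  current value pp of phi^+. For n(s,a) = 0 (phi = infinity) the formula evaluates to
  1 + max Vn.\<close>
definition Qval :: "nat \<Rightarrow> nat \<Rightarrow> nat \<Rightarrow> real \<Rightarrow> (nat \<Rightarrow> nat \<Rightarrow> nat) \<Rightarrow> (nat \<Rightarrow> nat \<Rightarrow> real)
    \<Rightarrow> (nat \<Rightarrow> nat \<Rightarrow> nat \<Rightarrow> nat) \<Rightarrow> nat \<Rightarrow> nat \<Rightarrow> nat \<Rightarrow> nat \<Rightarrow> (nat \<Rightarrow> real) \<Rightarrow> ereal \<Rightarrow> real" where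
  "Qval H S A \<delta> x rw pol k t s a Vn pp =
     (let n = cnt H x pol k s a; f = phi H S A \<delta> n in
      if n = 0 then 1 + maxV S Vn
      else min 1 (rhat H x rw pol k s a + f)
         + min (maxV S Vn)
               ((\<Sum>s'<S. phat H x pol k s a s' * Vn s')
                + real_of_ereal (min (ereal (real H - real t)) (ereal (rngV S Vn) + pp)) * f))"

text \<open>Relational description of a run of UBEV-S: Vt k t s is tilde V_t(s) computed in episode k,
  pol k s t = pi_k(s,t) (any argmax), phip k t j is the value of phi^+ just before state j is
  processed at timestep t of episode k (states processed in the order 0,1,...,S-1).\<close>
definition ubev_run :: "nat \<Rightarrow> nat \<Rightarrow> nat \<Rightarrow> real \<Rightarrow> (nat \<Rightarrow> nat \<Rightarrow> nat) \<Rightarrow> (nat \<Rightarrow> nat \<Rightarrow> real)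
    \<Rightarrow> (nat \<Rightarrow> nat \<Rightarrow> nat \<Rightarrow> nat) \<Rightarrow> (nat \<Rightarrow> nat \<Rightarrow> nat \<Rightarrow> real) \<Rightarrow> (nat \<Rightarrow> nat \<Rightarrow> nat \<Rightarrow> ereal) \<Rightarrow> bool" where
  "ubev_run H S A \<delta> x rw pol Vt phip \<longleftrightarrow>
     phip 1 H 0 = 0 \<and>
     (\<forall>k\<ge>1. \<forall>s<S. Vt k (H + 1) s = 0) \<and>
     (\<forall>k\<ge>1. \<forall>t\<in>{1..H}. \<forall>s<S.
        pol k s t < A \<and>
        (\<forall>a<A. Qval H S A \<delta> x rw pol k t s a (Vt k (t + 1)) (phip k t s)
                \<le> Qval H S A \<delta> x rw pol k t s (pol k s t) (Vt k (t + 1)) (phip k t s)) \<and>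
        Vt k t s = Qval H S A \<delta> x rw pol k t s (pol k s t) (Vt k (t + 1)) (phip k t s) \<and>
        phip k t (Suc s) =
          max (ereal (4 * sqrt (real S) * real H ^ 2) * phiE H S A \<delta> (cnt H x pol k s (pol k s t)))
              (phip k t s)) \<and>
     (\<forall>k\<ge>1. \<forall>t. 1 \<le> t \<and> t < H \<longrightarrow> phip k t 0 = phip k (Suc t) S) \<and>
     (\<forall>k\<ge>1. phip (Suc k) H 0 = phip k 1 S)"

fun Vopt :: "nat \<Rightarrow> nat \<Rightarrow> (nat \<Rightarrow> nat \<Rightarrow> real) \<Rightarrow> (nat \<Rightarrow> nat \<Rightarrow> nat \<Rightarrow> real) \<Rightarrow> nat \<Rightarrow> nat \<Rightarrow> real" where
  "Vopt S A r p 0 s = 0"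
| "Vopt S A r p (Suc m) s = Max ((\<lambda>a. r s a + (\<Sum>s'<S. p s a s' * Vopt S A r p m s')) ` {..<A})"

definition Vstar :: "nat \<Rightarrow> nat \<Rightarrow> nat \<Rightarrow> (nat \<Rightarrow> nat \<Rightarrow> real) \<Rightarrow> (nat \<Rightarrow> nat \<Rightarrow> nat \<Rightarrow> real) \<Rightarrow> nat \<Rightarrow> nat \<Rightarrow> real" where
  "Vstar H S A r p t s = Vopt S A r p (H + 1 - t) s"

text \<open>occ S p0 p pol i t s: probability of being in s at timestep t+1 of episode i under pi_i,
  starting from initial distribution p0.\<close>
fun occ :: "nat \<Rightarrow> (nat \<Rightarrow> real) \<Rightarrow> (nat \<Rightarrow> nat \<Rightarrow> nat \<Rightarrow> real) \<Rightarrow> (nat \<Rightarrow> nat \<Rightarrow> nat \<Rightarrow> nat)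
    \<Rightarrow> nat \<Rightarrow> nat \<Rightarrow> nat \<Rightarrow> real" where
  "occ S p0 p pol i 0 s = p0 s"
| "occ S p0 p pol i (Suc t) s' = (\<Sum>s<S. occ S p0 p pol i t s * p s (pol i s (Suc t)) s')"

definition w :: "nat \<Rightarrow> (nat \<Rightarrow> real) \<Rightarrow> (nat \<Rightarrow> nat \<Rightarrow> nat \<Rightarrow> real) \<Rightarrow> (nat \<Rightarrow> nat \<Rightarrow> nat \<Rightarrow> nat)
    \<Rightarrow> nat \<Rightarrow> nat \<Rightarrow> nat \<Rightarrow> nat \<Rightarrow> real" where
  "w S p0 p pol t i s a = (if pol i s t = a then occ S p0 p pol i (t - 1) s else 0)"

text \<open>Outside of the failure event. The three concentration conditions are vacuous for
  n_k(s,a) = 0, where phi_k(s,a) = infinity.\<close>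
definition outside_failure :: "nat \<Rightarrow> nat \<Rightarrow> nat \<Rightarrow> real \<Rightarrow> (nat \<Rightarrow> nat \<Rightarrow> real) \<Rightarrow> (nat \<Rightarrow> nat \<Rightarrow> nat \<Rightarrow> real)
    \<Rightarrow> (nat \<Rightarrow> real) \<Rightarrow> (nat \<Rightarrow> nat \<Rightarrow> nat) \<Rightarrow> (nat \<Rightarrow> nat \<Rightarrow> real) \<Rightarrow> (nat \<Rightarrow> nat \<Rightarrow> nat \<Rightarrow> nat) \<Rightarrow> bool" where
  "outside_failure H S A \<delta> r p p0 x rw pol \<longleftrightarrow>
     (\<forall>k\<ge>1. \<forall>s<S. \<forall>a<A.
        real (cnt H x pol k s a) \<ge>
          1/2 * (\<Sum>i\<in>{1..<k}. \<Sum>t\<in>{1..H}. w S p0 p pol t i s a) - real H * ln (9 * real S * real A / \<delta>)) \<and>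
     (\<forall>k\<ge>1. \<forall>s<S. \<forall>a<A. cnt H x pol k s a > 0 \<longrightarrow>
        (let n = cnt H x pol k s a; f = phi H S A \<delta> n in
          \<bar>rhat H x rw pol k s a - r s a\<bar> \<le> f \<and>
          (\<forall>t\<in>{1..H}.
             \<bar>\<Sum>s'<S. (phat H x pol k s a s' - p s a s') * Vstar H S A r p (t + 1) s'\<bar>
               \<le> rngV S (Vstar H S A r p (t + 1)) * f) \<and>
          (\<Sum>s'<S. \<bar>phat H x pol k s a s' - p s a s'\<bar>) \<le> 4 * sqrt (real S) * f))"

end

theory Submission
  imports Defs
begin

(* Optimism is proved by backward induction over the timestep. Outside the failure event the
   reward bonus covers the reward estimation error and the transition bonus covers the error
   in the backup of V*_{t+1}, provided rng V*_{t+1} is at most the factor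
   min {H - t, rng V~_{t+1} + phi+} that UBEV-S uses instead of it. Since V* <= V~ at later
   steps, this reduces to V~_{t+1} - V*_{t+1} <= phi+. Every pair (s, pi_k(s,j)) with j > t
   was processed earlier in the sweep and so has 4 sqrt S H^2 phi <= phi+; the one-step
   excess of V~ over V* at step j is (2 + (1 + 2 sqrt S)(H - j)) phi plus the expected
   excess at step j + 1, and summing over the remaining steps stays below phi+. *)

lemma sum_prob_mult_le:
  fixes q V :: "nat \<Rightarrow> real"
  assumes "\<And>i. i < n \<Longrightarrow> 0 \<le> q i" "(\<Sum>i<n. q i) = 1" "\<And>i. i < n \<Longrightarrow> V i \<le> c"
  shows "(\<Sum>i<n. q i * V i) \<le> c"
proof -
  have "(\<Sum>i<n. q i * V i) \<le> (\<Sum>i<n. q i * c)"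
    using assms(1,3) by (intro sum_mono mult_left_mono) auto
  also have "\<dots> = c"
    using assms(2) by (simp add: sum_distrib_right[symmetric])
  finally show ?thesis .
qed

lemma sum_prob_mult_ge:
  fixes q V :: "nat \<Rightarrow> real"
  assumes "\<And>i. i < n \<Longrightarrow> 0 \<le> q i" "(\<Sum>i<n. q i) = 1" "\<And>i. i < n \<Longrightarrow> c \<le> V i"
  shows "c \<le> (\<Sum>i<n. q i * V i)"
proof -
  have "c = (\<Sum>i<n. q i * c)"
    using assms(2) by (simp add: sum_distrib_right[symmetric])
  also have "\<dots> \<le> (\<Sum>i<n. q i * V i)"
    using assms(1,3) by (intro sum_mono mult_left_mono) auto
  finally show ?thesis .
qed

lemma sum_mult_le_half_l1:
  fixes d V :: "nat \<Rightarrow> real"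
  assumes "(\<Sum>i<n. d i) = 0" "\<And>i. i < n \<Longrightarrow> 0 \<le> V i \<and> V i \<le> R"
  shows "(\<Sum>i<n. d i * V i) \<le> (\<Sum>i<n. \<bar>d i\<bar>) * R / 2"
proof -
  have "d i * V i \<le> (\<bar>d i\<bar> + d i) / 2 * R" if "i < n" for i
  proof (cases "0 \<le> d i")
    case True
    then show ?thesis
      using assms(2)[OF that] by (simp add: mult_left_mono)
  next
    case False
    then show ?thesis
      using assms(2)[OF that] by (simp add: mult_nonpos_nonneg)
  qed
  then have "(\<Sum>i<n. d i * V i) \<le> (\<Sum>i<n. (\<bar>d i\<bar> + d i) / 2 * R)"
    by (intro sum_mono) auto
  also have "\<dots> = ((\<Sum>i<n. \<bar>d i\<bar>) + (\<Sum>i<n. d i)) / 2 * R"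
    by (simp add: sum_distrib_right[symmetric] sum_divide_distrib[symmetric] sum.distrib)
  finally show ?thesis
    using assms(1) by simp
qed

lemma real_of_ereal_min_le: "0 \<le> a \<Longrightarrow> real_of_ereal (min (ereal a) b) \<le> a"
  by (cases b) (auto simp: min_def)

lemma maxV_ge: "s < S \<Longrightarrow> V s \<le> maxV S V"
  by (auto simp: maxV_def Max_ge_iff)

lemma maxV_le: "0 < S \<Longrightarrow> (\<And>s. s < S \<Longrightarrow> V s \<le> c) \<Longrightarrow> maxV S V \<le> c"
  by (auto simp: maxV_def Max_le_iff lessThan_empty_iff)

lemma rngV_le:
  assumes "0 < S" "\<And>s. s < S \<Longrightarrow> 0 \<le> V s \<and> V s \<le> c"
  shows "rngV S V \<le> c"
proof -
  have "Max (V ` {..<S}) \<le> c" "0 \<le> Min (V ` {..<S})"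
    using assms by (auto simp: Max_le_iff Min_ge_iff lessThan_empty_iff)
  then show ?thesis
    by (simp add: rngV_def)
qed

lemma rngV_le_rngV_add:
  assumes "0 < S" "\<And>s. s < S \<Longrightarrow> W s \<le> V s" "\<And>s. s < S \<Longrightarrow> V s \<le> W s + G"
  shows "rngV S W \<le> rngV S V + G"
proof -
  have nonempty: "W ` {..<S} \<noteq> {}"
    using assms(1) by (auto simp: lessThan_empty_iff)
  have "W s \<le> maxV S V" if "s < S" for s
    using assms(2)[OF that] maxV_ge[OF that, of V] by linarith
  then have "Max (W ` {..<S}) \<le> Max (V ` {..<S})"
    using nonempty by (simp add: Max_le_iff maxV_def)
  moreover obtain s0 where "s0 < S" "W s0 = Min (W ` {..<S})"
    using Min_in[OF _ nonempty] by auto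
  moreover have "Min (V ` {..<S}) \<le> V s0"
    using \<open>s0 < S\<close> by (auto simp: Min_le_iff)
  ultimately show ?thesis
    unfolding rngV_def using assms(3)[of s0] by linarith
qed

lemma Vopt_Suc_ge:
  "a < A \<Longrightarrow> r s a + (\<Sum>s'<S. p s a s' * Vopt S A r p m s') \<le> Vopt S A r p (Suc m) s"
  by (auto simp: Max_ge_iff)

lemma Vopt_Suc_attained:
  assumes "0 < A"
  obtains a where "a < A" "Vopt S A r p (Suc m) s = r s a + (\<Sum>s'<S. p s a s' * Vopt S A r p m s')"
proof -
  have "Vopt S A r p (Suc m) s \<in> (\<lambda>a. r s a + (\<Sum>s'<S. p s a s' * Vopt S A r p m s')) ` {..<A}"
    unfolding Vopt.simps using assms by (intro Max_in) (auto simp: lessThan_empty_iff)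
  then show ?thesis
    using that by auto
qed

lemma Vopt_bounds:
  assumes "0 < A"
    and p_nonneg: "\<And>s a s'. s < S \<Longrightarrow> a < A \<Longrightarrow> s' < S \<Longrightarrow> 0 \<le> p s a s'"
    and p_sum: "\<And>s a. s < S \<Longrightarrow> a < A \<Longrightarrow> (\<Sum>s'<S. p s a s') = 1"
    and r_bounds: "\<And>s a. s < S \<Longrightarrow> a < A \<Longrightarrow> 0 \<le> r s a \<and> r s a \<le> 1"
  shows "s < S \<Longrightarrow> 0 \<le> Vopt S A r p m s \<and> Vopt S A r p m s \<le> real m"
proof (induction m arbitrary: s)
  case 0
  then show ?case by simp
next
  case (Suc m)
  have backup_bounds: "0 \<le> r s a + (\<Sum>s'<S. p s a s' * Vopt S A r p m s')
      \<and> r s a + (\<Sum>s'<S. p s a s' * Vopt S A r p m s') \<le> 1 + real m" if "a < A" for a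
  proof -
    have "0 \<le> (\<Sum>s'<S. p s a s' * Vopt S A r p m s')"
      using Suc.IH p_nonneg[OF Suc.prems that] p_sum[OF Suc.prems that] by (intro sum_prob_mult_ge) auto
    moreover have "(\<Sum>s'<S. p s a s' * Vopt S A r p m s') \<le> real m"
      using Suc.IH p_nonneg[OF Suc.prems that] p_sum[OF Suc.prems that] by (intro sum_prob_mult_le) auto
    ultimately show ?thesis
      using r_bounds[OF Suc.prems that] by linarith
  qed
  obtain a where "a < A" "Vopt S A r p (Suc m) s = r s a + (\<Sum>s'<S. p s a s' * Vopt S A r p m s')"
    using Vopt_Suc_attained[OF \<open>0 < A\<close>] .
  then show ?case
    using backup_bounds by simp
qed

lemma sum_tcnt_eq_cnt:
  assumes "\<And>i t. 1 \<le> i \<Longrightarrow> 1 \<le> t \<Longrightarrow> t \<le> H + 1 \<Longrightarrow> x i t < S"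
  shows "(\<Sum>s'<S. real (tcnt H x pol k s' s a)) = real (cnt H x pol k s a)"
proof -
  let ?V = "visits H x pol k s a"
  let ?next = "\<lambda>v. x (fst v) (Suc (snd v))"
  have "finite ?V"
    by (rule finite_subset[of _ "{..<k} \<times> {..H}"]) (auto simp: visits_def)
  have "real (cnt H x pol k s a) = (\<Sum>v\<in>?V. \<Sum>s'<S. if ?next v = s' then 1 else 0)"
  proof -
    have "?next v < S" if "v \<in> ?V" for v
      using that assms by (auto simp: visits_def)
    then show ?thesis
      by (simp add: cnt_def sum.delta)
  qed
  also have "\<dots> = (\<Sum>s'<S. \<Sum>v\<in>?V. if ?next v = s' then 1 else 0)"
    by (rule sum.swap)
  also have "\<dots> = (\<Sum>s'<S. real (tcnt H x pol k s' s a))"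
  proof -
    have "{v \<in> ?V. ?next v = s'} = {(i, t) \<in> ?V. x i (Suc t) = s'}" for s'
      by auto
    then show ?thesis
      using \<open>finite ?V\<close> by (simp add: sum.If_cases Int_def tcnt_def)
  qed
  finally show ?thesis ..
qed

lemma sum_phat_eq_1:
  assumes "\<And>i t. 1 \<le> i \<Longrightarrow> 1 \<le> t \<Longrightarrow> t \<le> H + 1 \<Longrightarrow> x i t < S" "0 < cnt H x pol k s a"
  shows "(\<Sum>s'<S. phat H x pol k s a s') = 1"
  using sum_tcnt_eq_cnt[OF assms(1), where pol = pol and k = k and s = s and a = a] assms(2)
  by (simp add: phat_def sum_divide_distrib[symmetric])

lemma phi_nonneg:
  assumes "1 \<le> H" "1 \<le> S" "1 \<le> A" "0 < \<delta>" "\<delta> \<le> 1"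
  shows "0 \<le> phi H S A \<delta> n"
proof -
  have "ln (exp 1) \<le> ln (max (exp 1) (real n))"
    by (subst ln_le_cancel_iff) (auto simp: less_max_iff_disj)
  then have "1 \<le> ln (max (exp 1) (real n))"
    by simp
  moreover have "(1::nat) \<le> 27 * H * S * A"
    using assms(1-3) by simp
  then have "1 \<le> 27 * real H * real S * real A"
    by (metis of_nat_1 of_nat_le_iff of_nat_mult of_nat_numeral)
  then have "1 \<le> 27 * real H * real S * real A / \<delta>"
    using assms(4,5) by (simp add: le_divide_eq mult_left_le order_trans)
  ultimately show ?thesis
    by (simp add: phi_def)
qed

lemma Qval_unvisited:
  "cnt H x pol k s a = 0 \<Longrightarrow> Qval H S A \<delta> x rw pol k t s a Vn pp = 1 + maxV S Vn"
  by (simp add: Qval_def)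

lemma Qval_visited:
  "0 < cnt H x pol k s a \<Longrightarrow> Qval H S A \<delta> x rw pol k t s a Vn pp =
     min 1 (rhat H x rw pol k s a + phi H S A \<delta> (cnt H x pol k s a))
     + min (maxV S Vn) ((\<Sum>s'<S. phat H x pol k s a s' * Vn s')
        + real_of_ereal (min (ereal (real H - real t)) (ereal (rngV S Vn) + pp))
          * phi H S A \<delta> (cnt H x pol k s a))"
  by (simp add: Qval_def Let_def)

lemma Qval_le: "Qval H S A \<delta> x rw pol k t s a Vn pp \<le> 1 + maxV S Vn"
  unfolding Qval_def Let_def by (auto simp: min_def)

text \<open>Summing the one-step excess over at most \<open>H - 1\<close> steps stays within the factor
  \<open>4 \<surd>S H\<^sup>2\<close> by which \<open>\<phi>\<^sup>+\<close> dominates every width.\<close>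
lemma gap_constant_bound:
  fixes h \<sigma> :: real
  assumes "1 \<le> h" "1 \<le> \<sigma>"
  shows "(h - 1) * (2 + (1 + 2 * \<sigma>) * (h - 1)) \<le> 4 * \<sigma> * h\<^sup>2"
proof -
  have "4 * \<sigma> * h\<^sup>2 - (h - 1) * (2 + (1 + 2 * \<sigma>) * (h - 1))
      = (2 * \<sigma> - 1) * (h - 1)\<^sup>2 + (8 * \<sigma> - 2) * (h - 1) + 4 * \<sigma>"
    by (simp add: algebra_simps power2_eq_square)
  moreover have "0 \<le> (2 * \<sigma> - 1) * (h - 1)\<^sup>2" "0 \<le> (8 * \<sigma> - 2) * (h - 1)"
    using assms by simp_all
  ultimately show ?thesis
    using assms by linarith
qed

locale ubev_good_run =
  fixes H S A :: nat and \<delta> :: real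
    and r :: "nat \<Rightarrow> nat \<Rightarrow> real" and p :: "nat \<Rightarrow> nat \<Rightarrow> nat \<Rightarrow> real" and p0 :: "nat \<Rightarrow> real"
    and x :: "nat \<Rightarrow> nat \<Rightarrow> nat" and rw :: "nat \<Rightarrow> nat \<Rightarrow> real"
    and pol :: "nat \<Rightarrow> nat \<Rightarrow> nat \<Rightarrow> nat" and Vt :: "nat \<Rightarrow> nat \<Rightarrow> nat \<Rightarrow> real"
    and phip :: "nat \<Rightarrow> nat \<Rightarrow> nat \<Rightarrow> ereal"
  assumes H_pos: "1 \<le> H" and S_pos: "1 \<le> S" and A_pos: "1 \<le> A"
    and delta_pos: "0 < \<delta>" and delta_le_1: "\<delta> \<le> 1"
    and p_nonneg: "\<And>s a s'. s < S \<Longrightarrow> a < A \<Longrightarrow> s' < S \<Longrightarrow> 0 \<le> p s a s'"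
    and p_sum: "\<And>s a. s < S \<Longrightarrow> a < A \<Longrightarrow> (\<Sum>s'<S. p s a s') = 1"
    and r_bounds: "\<And>s a. s < S \<Longrightarrow> a < A \<Longrightarrow> 0 \<le> r s a \<and> r s a \<le> 1"
    and x_in_range: "\<And>i t. 1 \<le> i \<Longrightarrow> 1 \<le> t \<Longrightarrow> t \<le> H + 1 \<Longrightarrow> x i t < S"
    and run: "ubev_run H S A \<delta> x rw pol Vt phip"
    and outside: "outside_failure H S A \<delta> r p p0 x rw pol"
begin

abbreviation "Vst \<equiv> Vstar H S A r p"
abbreviation "Q k t s a \<equiv> Qval H S A \<delta> x rw pol k t s a (Vt k (t + 1)) (phip k t s)"
abbreviation "\<phi> k s a \<equiv> phi H S A \<delta> (cnt H x pol k s a)"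
abbreviation "bonus k t s \<equiv>
  real_of_ereal (min (ereal (real H - real t)) (ereal (rngV S (Vt k (t + 1))) + phip k t s))"
abbreviation "C \<equiv> 4 * sqrt (real S) * real H ^ 2"
abbreviation "K \<equiv> 2 + (1 + 2 * sqrt (real S)) * (real H - 1)"

lemma \<phi>_nonneg: "0 \<le> \<phi> k s a"
  using phi_nonneg H_pos S_pos A_pos delta_pos delta_le_1 by blast

lemma phip_start: "phip 1 H 0 = 0"
  using run by (simp add: ubev_run_def)

lemma Vt_final: "k \<ge> 1 \<Longrightarrow> s < S \<Longrightarrow> Vt k (H + 1) s = 0"
  using run by (simp add: ubev_run_def)

context
  fixes k t s :: nat
  assumes step: "k \<ge> 1" "1 \<le> t" "t \<le> H" "s < S"
begin

lemma policy_lt: "pol k s t < A"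
  using run step unfolding ubev_run_def by auto

lemma Q_le_Vt: "a < A \<Longrightarrow> Q k t s a \<le> Vt k t s"
  using run step unfolding ubev_run_def by auto

lemma Vt_eq_Q: "Vt k t s = Q k t s (pol k s t)"
  using run step unfolding ubev_run_def by auto

lemma phip_Suc:
  "phip k t (Suc s) = max (ereal C * phiE H S A \<delta> (cnt H x pol k s (pol k s t))) (phip k t s)"
  using run step unfolding ubev_run_def by auto

end

lemma phip_next_timestep: "k \<ge> 1 \<Longrightarrow> 1 \<le> t \<Longrightarrow> t < H \<Longrightarrow> phip k t 0 = phip k (Suc t) S"
  using run unfolding ubev_run_def by auto

lemma phip_next_episode: "k \<ge> 1 \<Longrightarrow> phip (Suc k) H 0 = phip k 1 S"
  using run unfolding ubev_run_def by auto

lemma phip_mono_state: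
  assumes "k \<ge> 1" "1 \<le> t" "t \<le> H" "s \<le> s'" "s' \<le> S"
  shows "phip k t s \<le> phip k t s'"
  using assms(4)
proof (induction s' rule: dec_induct)
  case base
  then show ?case by simp
next
  case (step n)
  then have "phip k t n \<le> phip k t (Suc n)"
    using assms phip_Suc[of k t n] by simp
  then show ?case
    using step.IH by order
qed

lemma phip_antimono_timestep:
  assumes "k \<ge> 1" "1 \<le> t" "t \<le> t'" "t' \<le> H"
  shows "phip k t' 0 \<le> phip k t 0"
  using assms(3)
proof (induction t' rule: dec_induct)
  case base
  then show ?case by simp
next
  case (step n)
  have "phip k (Suc n) 0 \<le> phip k (Suc n) S"
    using assms step by (intro phip_mono_state) auto
  also have "\<dots> = phip k n 0"
    using assms step by (simp add: phip_next_timestep)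
  also have "\<dots> \<le> phip k t 0"
    by (rule step.IH)
  finally show ?case .
qed

lemma phip_last_timestep_nonneg: "k \<ge> 1 \<Longrightarrow> 0 \<le> phip k H 0"
proof (induction k rule: dec_induct)
  case base
  then show ?case
    using phip_start by simp
next
  case (step n)
  have "phip n H 0 \<le> phip n 1 0"
    using step H_pos by (intro phip_antimono_timestep) auto
  also have "\<dots> \<le> phip n 1 S"
    using step H_pos by (intro phip_mono_state) auto
  finally show ?case
    using step by (simp add: phip_next_episode)
qed

lemma phip_nonneg:
  assumes "k \<ge> 1" "1 \<le> t" "t \<le> H" "s \<le> S"
  shows "0 \<le> phip k t s"
proof -
  have "0 \<le> phip k H 0"
    using assms by (simp add: phip_last_timestep_nonneg)
  also have "\<dots> \<le> phip k t 0"
    using assms by (intro phip_antimono_timestep) auto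
  also have "\<dots> \<le> phip k t s"
    using assms by (intro phip_mono_state) auto
  finally show ?thesis .
qed

text \<open>Timesteps are processed backwards, so every pair used by \<open>\<pi>\<^sub>k\<close> at a later timestep
  has already entered \<open>\<phi>\<^sup>+\<close>.\<close>
lemma phiE_later_le_phip:
  assumes "k \<ge> 1" "1 \<le> t" "t < j" "j \<le> H" "s' < S" "s \<le> S"
  shows "ereal C * phiE H S A \<delta> (cnt H x pol k s' (pol k s' j)) \<le> phip k t s"
proof -
  have "ereal C * phiE H S A \<delta> (cnt H x pol k s' (pol k s' j)) \<le> phip k j (Suc s')"
    using assms by (simp add: phip_Suc)
  also have "\<dots> \<le> phip k j S"
    using assms by (intro phip_mono_state) auto
  also have "\<dots> = phip k (j - 1) 0"
    using assms phip_next_timestep[of k "j - 1"] by simp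
  also have "\<dots> \<le> phip k t 0"
    using assms by (intro phip_antimono_timestep) auto
  also have "\<dots> \<le> phip k t s"
    using assms by (intro phip_mono_state) auto
  finally show ?thesis .
qed

lemma Vt_le_horizon:
  "k \<ge> 1 \<Longrightarrow> 1 \<le> t \<Longrightarrow> t \<le> H + 1 \<Longrightarrow> s < S \<Longrightarrow> Vt k t s \<le> real H + 1 - real t"
proof (induction "H + 1 - t" arbitrary: t s)
  case 0
  then show ?case
    using Vt_final[of k s] by simp
next
  case (Suc m)
  then have "t \<le> H" by simp
  have "maxV S (Vt k (t + 1)) \<le> real H - real t"
    using Suc.hyps(1)[of "t + 1"] Suc.hyps(2) Suc.prems S_pos by (intro maxV_le) auto
  moreover have "Vt k t s \<le> 1 + maxV S (Vt k (t + 1))"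
    using Suc.prems \<open>t \<le> H\<close> Vt_eq_Q Qval_le by metis
  ultimately show ?case by simp
qed

lemma Vst_bounds: "t \<le> H + 1 \<Longrightarrow> s < S \<Longrightarrow> 0 \<le> Vst t s \<and> Vst t s \<le> real H + 1 - real t"
  using Vopt_bounds[of A S p r s "H + 1 - t"] A_pos p_nonneg p_sum r_bounds
  by (simp add: Vstar_def of_nat_diff)

lemma Vst_final: "Vst (H + 1) s = 0"
  by (simp add: Vstar_def)

lemma Vst_ge_backup: "t \<le> H \<Longrightarrow> a < A \<Longrightarrow> r s a + (\<Sum>s'<S. p s a s' * Vst (t + 1) s') \<le> Vst t s"
  using Vopt_Suc_ge[where S = S and A = A and r = r and p = p and m = "H - t"]
  by (simp add: Vstar_def Suc_diff_le)

lemma Vst_attained: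
  assumes "t \<le> H"
  obtains a where "a < A" "Vst t s = r s a + (\<Sum>s'<S. p s a s' * Vst (t + 1) s')"
  using Vopt_Suc_attained[where S = S and A = A and r = r and p = p and m = "H - t" and s = s] A_pos assms
  by (auto simp: Vstar_def Suc_diff_le)

context
  fixes k s a :: nat
  assumes pair: "k \<ge> 1" "s < S" "a < A" "0 < cnt H x pol k s a"
begin

lemma rhat_err: "\<bar>rhat H x rw pol k s a - r s a\<bar> \<le> \<phi> k s a"
  using outside pair unfolding outside_failure_def Let_def by blast

lemma phat_Vst_err:
  "1 \<le> t \<Longrightarrow> t \<le> H \<Longrightarrow>
    \<bar>\<Sum>s'<S. (phat H x pol k s a s' - p s a s') * Vst (t + 1) s'\<bar> \<le> rngV S (Vst (t + 1)) * \<phi> k s a"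
  using outside pair unfolding outside_failure_def Let_def by auto

lemma phat_l1_err: "(\<Sum>s'<S. \<bar>phat H x pol k s a s' - p s a s'\<bar>) \<le> 4 * sqrt (real S) * \<phi> k s a"
  using outside pair unfolding outside_failure_def Let_def by blast

end

lemma Vt_sub_Vst_step:
  assumes "k \<ge> 1" "1 \<le> j" "j \<le> H" "s < S" "0 < cnt H x pol k s (pol k s j)"
    and next_nonneg: "\<And>s'. s' < S \<Longrightarrow> 0 \<le> Vt k (j + 1) s'"
    and next_gap: "\<And>s'. s' < S \<Longrightarrow> Vt k (j + 1) s' - Vst (j + 1) s' \<le> g"
  shows "Vt k j s - Vst j s \<le> (2 + (1 + 2 * sqrt (real S)) * (real H - real j)) * \<phi> k s (pol k s j) + g"
proof -
  define a where "a = pol k s j"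
  define f where "f = \<phi> k s a"
  define Vn where "Vn = Vt k (j + 1)"
  define Ws where "Ws = Vst (j + 1)"
  have "a < A" "0 \<le> f"
    using assms policy_lt \<phi>_nonneg by (auto simp: a_def f_def)
  have pair: "k \<ge> 1" "s < S" "a < A" "0 < cnt H x pol k s a"
    using assms \<open>a < A\<close> by (auto simp: a_def)
  have "bonus k j s * f \<le> (real H - real j) * f"
    using \<open>j \<le> H\<close> \<open>0 \<le> f\<close> by (intro mult_right_mono real_of_ereal_min_le) auto
  then have Vt_bound: "Vt k j s \<le> rhat H x rw pol k s a + f + (\<Sum>s'<S. phat H x pol k s a s' * Vn s') + (real H - real j) * f"
    using assms Vt_eq_Q[of k j s] Qval_visited[OF pair(4)]
    by (simp add: a_def f_def Vn_def)
  have Vst_ge: "r s a + (\<Sum>s'<S. p s a s' * Ws s') \<le> Vst j s"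
    using Vst_ge_backup[OF \<open>j \<le> H\<close> \<open>a < A\<close>] by (simp add: Ws_def)
  have transition_err: "(\<Sum>s'<S. (phat H x pol k s a s' - p s a s') * Vn s') \<le> 2 * sqrt (real S) * (real H - real j) * f"
  proof -
    have "(\<Sum>s'<S. phat H x pol k s a s' - p s a s') = 0"
      using sum_phat_eq_1[OF x_in_range pair(4)] p_sum[OF pair(2,3)] by (simp add: sum_subtractf)
    moreover have "0 \<le> Vn s' \<and> Vn s' \<le> real H - real j" if "s' < S" for s'
      using next_nonneg[OF that] Vt_le_horizon[of k "j + 1" s'] assms that by (simp add: Vn_def)
    ultimately have "(\<Sum>s'<S. (phat H x pol k s a s' - p s a s') * Vn s')
        \<le> (\<Sum>s'<S. \<bar>phat H x pol k s a s' - p s a s'\<bar>) * (real H - real j) / 2"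
      by (rule sum_mult_le_half_l1)
    also have "\<dots> \<le> 4 * sqrt (real S) * f * (real H - real j) / 2"
      using phat_l1_err[OF pair] \<open>j \<le> H\<close> by (intro divide_right_mono mult_right_mono) (auto simp: f_def)
    also have "\<dots> = 2 * sqrt (real S) * (real H - real j) * f"
      by simp
    finally show ?thesis .
  qed
  have next_err: "(\<Sum>s'<S. p s a s' * (Vn s' - Ws s')) \<le> g"
    using next_gap p_nonneg[OF pair(2,3)] p_sum[OF pair(2,3)]
    by (intro sum_prob_mult_le) (auto simp: Vn_def Ws_def)
  have "(\<Sum>s'<S. phat H x pol k s a s' * Vn s') - (\<Sum>s'<S. p s a s' * Ws s')
      = (\<Sum>s'<S. (phat H x pol k s a s' - p s a s') * Vn s') + (\<Sum>s'<S. p s a s' * (Vn s' - Ws s'))"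
    by (simp add: sum_subtractf[symmetric] sum.distrib[symmetric] algebra_simps)
  moreover have "(2 + (1 + 2 * sqrt (real S)) * (real H - real j)) * f
      = 2 * f + (real H - real j) * f + 2 * sqrt (real S) * (real H - real j) * f"
    by (simp add: algebra_simps)
  ultimately show ?thesis
    using Vt_bound Vst_ge rhat_err[OF pair] transition_err next_err by (simp add: a_def f_def)
qed

lemma later_pair_visited:
  assumes "k \<ge> 1" "1 \<le> t" "t < j" "j \<le> H" "s < S" "s0 \<le> S" "phip k t s0 = ereal q"
  shows "0 < cnt H x pol k s (pol k s j) \<and> \<phi> k s (pol k s j) \<le> q / C"
proof -
  have "C > 0"
    using S_pos H_pos by simp
  have width_le: "ereal C * phiE H S A \<delta> (cnt H x pol k s (pol k s j)) \<le> ereal q"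
    using phiE_later_le_phip[of k t j s s0] assms by simp
  then have "0 < cnt H x pol k s (pol k s j)"
    using \<open>C > 0\<close> S_pos H_pos by (cases "cnt H x pol k s (pol k s j)") (auto simp: phiE_def)
  then show ?thesis
    using width_le \<open>C > 0\<close> by (simp add: phiE_def pos_le_divide_eq mult.commute)
qed

lemma Vt_sub_Vst_le:
  assumes "k \<ge> 1"
    and later_pairs: "\<And>j s. t < j \<Longrightarrow> j \<le> H \<Longrightarrow> s < S \<Longrightarrow>
      0 < cnt H x pol k s (pol k s j) \<and> \<phi> k s (pol k s j) \<le> u"
    and optimistic_later: "\<And>j s. t < j \<Longrightarrow> j \<le> H + 1 \<Longrightarrow> s < S \<Longrightarrow> Vst j s \<le> Vt k j s"
  shows "t < j \<Longrightarrow> j \<le> H + 1 \<Longrightarrow> s < S \<Longrightarrow> Vt k j s - Vst j s \<le> (real H + 1 - real j) * K * u"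
proof (induction "H + 1 - j" arbitrary: j s)
  case 0
  then show ?case
    using Vt_final[of k s] Vst_final[of s] assms(1) by simp
next
  case (Suc m)
  then have "1 \<le> j" "j \<le> H"
    by auto
  have "0 \<le> 2 + (1 + 2 * sqrt (real S)) * (real H - real j)"
    "2 + (1 + 2 * sqrt (real S)) * (real H - real j) \<le> K"
    using \<open>1 \<le> j\<close> \<open>j \<le> H\<close> by (auto intro!: mult_left_mono)
  then have "(2 + (1 + 2 * sqrt (real S)) * (real H - real j)) * \<phi> k s (pol k s j) \<le> K * u"
    using later_pairs[of j s] Suc.prems \<phi>_nonneg \<open>j \<le> H\<close> by (intro mult_mono) auto
  moreover have "Vt k j s - Vst j s
      \<le> (2 + (1 + 2 * sqrt (real S)) * (real H - real j)) * \<phi> k s (pol k s j) + (real H - real j) * K * u"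
  proof (rule Vt_sub_Vst_step[OF assms(1) \<open>1 \<le> j\<close> \<open>j \<le> H\<close> Suc.prems(3)])
    show "0 < cnt H x pol k s (pol k s j)"
      using later_pairs[of j s] Suc.prems \<open>j \<le> H\<close> by blast
    show "0 \<le> Vt k (j + 1) s'" if "s' < S" for s'
      using optimistic_later[of "j + 1" s'] Vst_bounds[of "j + 1" s'] Suc.prems that \<open>j \<le> H\<close> by fastforce
    show "Vt k (j + 1) s' - Vst (j + 1) s' \<le> (real H - real j) * K * u" if "s' < S" for s'
      using Suc.hyps(1)[of "j + 1" s'] Suc.hyps(2) Suc.prems that by simp
  qed
  moreover have "K * u + (real H - real j) * K * u = (real H + 1 - real j) * K * u"
    by (simp add: algebra_simps)
  ultimately show ?case
    by linarith
qed

lemma rngV_Vst_le_bonus: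
  assumes "k \<ge> 1" "1 \<le> t" "t \<le> H" "s < S"
    and optimistic_later: "\<And>j s. t < j \<Longrightarrow> j \<le> H + 1 \<Longrightarrow> s < S \<Longrightarrow> Vst j s \<le> Vt k j s"
  shows "rngV S (Vst (t + 1)) \<le> bonus k t s"
proof -
  have rng_le_steps: "rngV S (Vst (t + 1)) \<le> real H - real t"
    using S_pos Vst_bounds[of "t + 1"] assms(3) by (intro rngV_le) auto
  have "0 \<le> phip k t s"
    using assms phip_nonneg by simp
  then consider (finite) q where "phip k t s = ereal q" | (infinite) "phip k t s = \<infinity>"
    by (cases "phip k t s") auto
  then show ?thesis
  proof cases
    case finite
    have "0 \<le> q"
      using \<open>0 \<le> phip k t s\<close> finite by simp
    have "(real H - real t) * K * (q / C) \<le> (real H - 1) * K * (q / C)"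
      using assms(2) \<open>0 \<le> q\<close> H_pos by (intro mult_right_mono) auto
    also have "\<dots> \<le> C * (q / C)"
      using gap_constant_bound[of "real H" "sqrt (real S)"] H_pos S_pos \<open>0 \<le> q\<close>
      by (intro mult_right_mono) auto
    also have "\<dots> = q"
      using H_pos S_pos by simp
    finally have gap_le_q: "(real H - real t) * K * (q / C) \<le> q" .
    have later_pairs: "0 < cnt H x pol k s' (pol k s' j) \<and> \<phi> k s' (pol k s' j) \<le> q / C"
      if "t < j" "j \<le> H" "s' < S" for j s'
      using later_pair_visited[OF assms(1,2) that less_imp_le[OF assms(4)] finite] .
    have "Vt k (t + 1) s' - Vst (t + 1) s' \<le> (real H - real t) * K * (q / C)" if "s' < S" for s'
      using Vt_sub_Vst_le[OF assms(1) later_pairs optimistic_later, where j = "t + 1" and s = s'] that assms(3) by simp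
    then have "Vt k (t + 1) s' \<le> Vst (t + 1) s' + q" if "s' < S" for s'
      using that gap_le_q by fastforce
    then have "rngV S (Vst (t + 1)) \<le> rngV S (Vt k (t + 1)) + q"
      using S_pos optimistic_later[of "t + 1"] assms(3) by (intro rngV_le_rngV_add) auto
    then show ?thesis
      using rng_le_steps finite by (simp flip: ereal_min)
  next
    case infinite
    then show ?thesis
      using rng_le_steps by simp
  qed
qed

lemma Vst_backup_le_Q:
  assumes "k \<ge> 1" "1 \<le> t" "t \<le> H" "s < S" "a < A"
    and optimistic_later: "\<And>j s. t < j \<Longrightarrow> j \<le> H + 1 \<Longrightarrow> s < S \<Longrightarrow> Vst j s \<le> Vt k j s"
  shows "r s a + (\<Sum>s'<S. p s a s' * Vst (t + 1) s') \<le> Q k t s a"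
proof -
  have next_le: "Vst (t + 1) s' \<le> Vt k (t + 1) s'" if "s' < S" for s'
    using optimistic_later that assms(3) by simp
  have "Vst (t + 1) s' \<le> maxV S (Vt k (t + 1))" if "s' < S" for s'
    using next_le[OF that] maxV_ge[OF that] by (rule order_trans)
  then have below_max: "(\<Sum>s'<S. p s a s' * Vst (t + 1) s') \<le> maxV S (Vt k (t + 1))"
    using p_nonneg[OF assms(4,5)] p_sum[OF assms(4,5)] by (intro sum_prob_mult_le) auto
  show ?thesis
  proof (cases "cnt H x pol k s a = 0")
    case True
    then show ?thesis
      using below_max r_bounds[OF assms(4,5)] by (simp add: Qval_unvisited)
  next
    case False
    then have pair: "0 < cnt H x pol k s a"
      by simp
    have reward_le: "r s a \<le> min 1 (rhat H x rw pol k s a + \<phi> k s a)"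
      using rhat_err[OF assms(1,4,5) pair] r_bounds[OF assms(4,5)] by linarith
    have "(\<Sum>s'<S. phat H x pol k s a s' * Vst (t + 1) s') \<le> (\<Sum>s'<S. phat H x pol k s a s' * Vt k (t + 1) s')"
      using next_le by (intro sum_mono mult_left_mono) (auto simp: phat_def)
    moreover have "rngV S (Vst (t + 1)) * \<phi> k s a \<le> bonus k t s * \<phi> k s a"
      using rngV_Vst_le_bonus[OF assms(1-4) optimistic_later] \<phi>_nonneg by (intro mult_right_mono) auto
    moreover have "(\<Sum>s'<S. p s a s' * Vst (t + 1) s')
        = (\<Sum>s'<S. phat H x pol k s a s' * Vst (t + 1) s') - (\<Sum>s'<S. (phat H x pol k s a s' - p s a s') * Vst (t + 1) s')"
      by (simp add: sum_subtractf[symmetric] algebra_simps)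
    ultimately have "(\<Sum>s'<S. p s a s' * Vst (t + 1) s')
        \<le> (\<Sum>s'<S. phat H x pol k s a s' * Vt k (t + 1) s') + bonus k t s * \<phi> k s a"
      using phat_Vst_err[OF assms(1,4,5) pair assms(2,3)] by linarith
    then show ?thesis
      unfolding Qval_visited[OF pair] using reward_le below_max by (intro add_mono min.boundedI) auto
  qed
qed

lemma Vst_le_Vt:
  assumes "k \<ge> 1" "1 \<le> t" "t \<le> H + 1" "s < S"
  shows "Vst t s \<le> Vt k t s"
  using assms(2-4)
proof (induction "H + 1 - t" arbitrary: t s rule: less_induct)
  case less
  show ?case
  proof (cases "t = H + 1")
    case True
    then show ?thesis
      using Vt_final[OF assms(1) less.prems(3)] Vst_final by simp
  next
    case False
    then have "t \<le> H"
      using less.prems by simp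
    have optimistic_later: "Vst j s' \<le> Vt k j s'" if "t < j" "j \<le> H + 1" "s' < S" for j s'
      using less.hyps[of j s'] less.prems that by simp
    obtain a where a: "a < A" "Vst t s = r s a + (\<Sum>s'<S. p s a s' * Vst (t + 1) s')"
      using Vst_attained[OF \<open>t \<le> H\<close>] .
    have "Vst t s \<le> Q k t s a"
      using a Vst_backup_le_Q[OF assms(1) less.prems(1) \<open>t \<le> H\<close> less.prems(3) \<open>a < A\<close> optimistic_later]
      by simp
    also have "\<dots> \<le> Vt k t s"
      using Q_le_Vt[OF assms(1) less.prems(1) \<open>t \<le> H\<close> less.prems(3) a(1)] .
    finally show ?thesis .
  qed
qed

end

theorem lemma6:
  fixes H S A :: nat and \<delta> :: real
    and r :: "nat \<Rightarrow> nat \<Rightarrow> real" and p :: "nat \<Rightarrow> nat \<Rightarrow> nat \<Rightarrow> real" and p0 :: "nat \<Rightarrow> real"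
    and x :: "nat \<Rightarrow> nat \<Rightarrow> nat" and rw :: "nat \<Rightarrow> nat \<Rightarrow> real"
    and pol :: "nat \<Rightarrow> nat \<Rightarrow> nat \<Rightarrow> nat" and Vt :: "nat \<Rightarrow> nat \<Rightarrow> nat \<Rightarrow> real"
    and phip :: "nat \<Rightarrow> nat \<Rightarrow> nat \<Rightarrow> ereal"
  assumes "H \<ge> 1" and "S \<ge> 1" and "A \<ge> 1"
    and "0 < \<delta>" and "\<delta> \<le> 1"
    and "\<And>s a s'. s < S \<Longrightarrow> a < A \<Longrightarrow> s' < S \<Longrightarrow> p s a s' \<ge> 0"
    and "\<And>s a. s < S \<Longrightarrow> a < A \<Longrightarrow> (\<Sum>s'<S. p s a s') = 1"
    and "\<And>s a. s < S \<Longrightarrow> a < A \<Longrightarrow> 0 \<le> r s a \<and> r s a \<le> 1"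
    and "\<And>s. s < S \<Longrightarrow> p0 s \<ge> 0" and "(\<Sum>s<S. p0 s) = 1"
    and "\<And>i t. 1 \<le> i \<Longrightarrow> 1 \<le> t \<Longrightarrow> t \<le> H + 1 \<Longrightarrow> x i t < S"
    and "\<And>i t. 1 \<le> i \<Longrightarrow> 1 \<le> t \<Longrightarrow> t \<le> H \<Longrightarrow> 0 \<le> rw i t \<and> rw i t \<le> 1"
    and "ubev_run H S A \<delta> x rw pol Vt phip"
    and "outside_failure H S A \<delta> r p p0 x rw pol"
  shows "\<forall>k\<ge>1. \<forall>t\<in>{1..H}. \<forall>s<S. Vt k t s \<ge> Vstar H S A r p t s"
proof -
  interpret ubev_good_run H S A \<delta> r p p0 x rw pol Vt phip
    using assms by unfold_locales auto
  show ?thesis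
    using Vst_le_Vt by auto
qed

end
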